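(* Let $K\ge2$, $\mathcal{X}\subseteq\mathbb{R}^d$, $(X,Y)$ a random pair on $\mathcal{X}\times\mathbb{R}$ with $X$-marginal $P_X$, expert maps $f_k(\cdot;\theta_k)$ with $\theta=(\theta_1,\dots,\theta_K)\in\Theta=\prod_k\Theta_k$, and router logits $a(\cdot;\phi)\in\mathbb{R}^K$, $\phi\in\Phi$. Assume: (i) there exist $C_{\mathrm{mt}}>0,\alpha>0$ with $\mathbb{P}(\Delta(X;\phi)\le t)\le C_{\mathrm{mt}}t^\alpha$ for all $\phi\in\Phi$ and all $t>0$; (ii) there exist $B_Y,B_f>0$ with $|Y|\le B_Y$ a.s. and $|f_k(x;\theta_k)|\le B_f$ for all $k$, $x$, $\theta_k$; (iii) $\Theta\times\Phi$ carries a topology in which it is compact, in which each map $\theta_k\mapsto f_k(\cdot;\theta_k)$ is continuous into $L^2(P_X)$, and in which $\phi\mapsto a(\cdot;\phi)$ is continuous into $L^2(P_X)$ and into $L^\infty(P_X)$. Then $L_\tau$ $\Gamma$-converges to $L_0$ on $\Theta\times\Phi$ as $\tau\to0$. In particular: (a) if $(\theta_\tau,\phi_\tau)\to(\theta,\phi)$ as $\tau\to0$, then $L_0(\theta,\phi)\le\liminf_{\tau\to0}L_\tau(\theta_\tau,\phi_\tau)$; (b) for every $(\theta,\phi)$ there is a sequence $(\theta_\tau,\phi_\tau)\to(\theta,\phi)$ with $L_0(\theta,\phi)\ge\limsup_{\tau\to0}L_\tau(\theta_\tau,\phi_\tau)$; (c) any family of almost minimizers $(\theta_\tau,\phi_\tau)$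 with $L_\tau(\theta_\tau,\phi_\tau)-\inf L_\tau\to0$ is precompact, and every cluster point is a minimizer of $L_0$.
   Context: Softmax weights $p_k^{(\tau)}(x;\phi)=\exp(a_k(x;\phi)/\tau)/\sum_j\exp(a_j(x;\phi)/\tau)$; soft predictor $h_{\theta,\phi,\tau}=\sum_kp_k^{(\tau)}f_k(\cdot;\theta_k)$; soft risk $L_\tau(\theta,\phi)=\mathbb{E}[(Y-h_{\theta,\phi,\tau}(X))^2]$. Top-two margin $\Delta(x;\phi)=a_{(1)}(x;\phi)-a_{(2)}(x;\phi)$ (largest minus second-largest logit). Hard winner $k^\star(x;\phi)=\min\arg\max_ka_k(x;\phi)$, hard predictor $h_{\theta,\phi,0}(x)=f_{k^\star(x;\phi)}(x;\theta_{k^\star(x;\phi)})$, hard risk $L_0(\theta,\phi)=\mathbb{E}[(Y-h_{\theta,\phi,0}(X))^2]$. *)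

theory Defs
  imports "HOL-Probability.Probability"
begin

text \<open>Logit vectors are functions nat => real, only indices k < K matter.\<close>

definition softmax :: "nat \<Rightarrow> (nat \<Rightarrow> real) \<Rightarrow> real \<Rightarrow> nat \<Rightarrow> real" where
  "softmax K v \<tau> k = exp (v k / \<tau>) / (\<Sum>j<K. exp (v j / \<tau>))"

text \<open>Top-two margin: largest minus second-largest entry (with multiplicity).\<close>
definition margin :: "nat \<Rightarrow> (nat \<Rightarrow> real) \<Rightarrow> real" where
  "margin K v = (let l = rev (sort (map v [0..<K])) in l ! 0 - l ! 1)"

definition hard_winner :: "nat \<Rightarrow> (nat \<Rightarrow> real) \<Rightarrow> nat" where
  "hard_winner K v = (LEAST k. k < K \<and> (\<forall>j<K. v j \<le> v k))"

definition soft_pred ::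
  "nat \<Rightarrow> (nat \<Rightarrow> 't \<Rightarrow> 'x \<Rightarrow> real) \<Rightarrow> ('f \<Rightarrow> 'x \<Rightarrow> nat \<Rightarrow> real)
   \<Rightarrow> real \<Rightarrow> (nat \<Rightarrow> 't) \<times> 'f \<Rightarrow> 'x \<Rightarrow> real" where
  "soft_pred K f a \<tau> p x = (\<Sum>k<K. softmax K (a (snd p) x) \<tau> k * f k (fst p k) x)"

definition hard_pred ::
  "nat \<Rightarrow> (nat \<Rightarrow> 't \<Rightarrow> 'x \<Rightarrow> real) \<Rightarrow> ('f \<Rightarrow> 'x \<Rightarrow> nat \<Rightarrow> real)
   \<Rightarrow> (nat \<Rightarrow> 't) \<times> 'f \<Rightarrow> 'x \<Rightarrow> real" where
  "hard_pred K f a p x =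
     (let k = hard_winner K (a (snd p) x) in f k (fst p k) x)"

definition soft_risk ::
  "'w measure \<Rightarrow> ('w \<Rightarrow> 'x) \<Rightarrow> ('w \<Rightarrow> real) \<Rightarrow> nat \<Rightarrow> (nat \<Rightarrow> 't \<Rightarrow> 'x \<Rightarrow> real)
   \<Rightarrow> ('f \<Rightarrow> 'x \<Rightarrow> nat \<Rightarrow> real) \<Rightarrow> real \<Rightarrow> (nat \<Rightarrow> 't) \<times> 'f \<Rightarrow> real" where
  "soft_risk M X Y K f a \<tau> p = (\<integral>\<omega>. (Y \<omega> - soft_pred K f a \<tau> p (X \<omega>))\<^sup>2 \<partial>M)"

definition hard_risk ::
  "'w measure \<Rightarrow> ('w \<Rightarrow> 'x) \<Rightarrow> ('w \<Rightarrow> real) \<Rightarrow> nat \<Rightarrow> (nat \<Rightarrow> 't \<Rightarrow> 'x \<Rightarrow> real)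
   \<Rightarrow> ('f \<Rightarrow> 'x \<Rightarrow> nat \<Rightarrow> real) \<Rightarrow> (nat \<Rightarrow> 't) \<times> 'f \<Rightarrow> real" where
  "hard_risk M X Y K f a p = (\<integral>\<omega>. (Y \<omega> - hard_pred K f a p (X \<omega>))\<^sup>2 \<partial>M)"

definition in_L2 :: "'x measure \<Rightarrow> ('x \<Rightarrow> real) \<Rightarrow> bool" where
  "in_L2 P g \<longleftrightarrow> g \<in> borel_measurable P \<and> integrable P (\<lambda>x. (g x)\<^sup>2)"

definition in_Linf :: "'x measure \<Rightarrow> ('x \<Rightarrow> real) \<Rightarrow> bool" where
  "in_Linf P g \<longleftrightarrow> g \<in> borel_measurable P \<and> (\<exists>B. AE x in P. \<bar>g x\<bar> \<le> B)"

definition L2_continuous :: "'p topology \<Rightarrow> 'x measure \<Rightarrow> ('p \<Rightarrow> 'x \<Rightarrow> real) \<Rightarrow> bool" where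
  "L2_continuous T P F \<longleftrightarrow>
     (\<forall>p\<in>topspace T. \<forall>e>0. \<exists>U. openin T U \<and> p \<in> U \<and>
        (\<forall>q\<in>U. (\<integral>x. (F q x - F p x)\<^sup>2 \<partial>P) < e))"

definition Linf_continuous :: "'p topology \<Rightarrow> 'x measure \<Rightarrow> ('p \<Rightarrow> 'x \<Rightarrow> real) \<Rightarrow> bool" where
  "Linf_continuous T P F \<longleftrightarrow>
     (\<forall>p\<in>topspace T. \<forall>e>0. \<exists>U. openin T U \<and> p \<in> U \<and>
        (\<forall>q\<in>U. AE x in P. \<bar>F q x - F p x\<bar> \<le> e))"

text \<open>Gamma-convergence (topological definition, Dal Maso) of F tau to F0 as tau -> 0+.\<close>
definition gamma_liminf :: "'p topology \<Rightarrow> (real \<Rightarrow> 'p \<Rightarrow> real) \<Rightarrow> 'p \<Rightarrow> ereal" where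
  "gamma_liminf T F p =
     (SUP U\<in>{U. openin T U \<and> p \<in> U}. Liminf (at_right 0) (\<lambda>\<tau>. INF q\<in>U. ereal (F \<tau> q)))"

definition gamma_limsup :: "'p topology \<Rightarrow> (real \<Rightarrow> 'p \<Rightarrow> real) \<Rightarrow> 'p \<Rightarrow> ereal" where
  "gamma_limsup T F p =
     (SUP U\<in>{U. openin T U \<and> p \<in> U}. Limsup (at_right 0) (\<lambda>\<tau>. INF q\<in>U. ereal (F \<tau> q)))"

definition gamma_converges :: "'p topology \<Rightarrow> (real \<Rightarrow> 'p \<Rightarrow> real) \<Rightarrow> ('p \<Rightarrow> real) \<Rightarrow> bool" where
  "gamma_converges T F F0 \<longleftrightarrow>
     (\<forall>p\<in>topspace T. gamma_liminf T F p = ereal (F0 p) \<and> gamma_limsup T F p = ereal (F0 p))"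

end

theory Submission
  imports Defs "HOL-Real_Asymp.Real_Asymp"
begin

text \<open>
  The soft predictor differs from the hard one only through the softmax weights of the losing
  experts, each at most \<open>exp (- \<Delta> / \<tau>)\<close>. Splitting on whether the margin \<open>\<Delta>\<close> exceeds a
  threshold \<open>t\<close> and using the margin condition gives, uniformly in the parameters,
  \<open>\<bar>L\<^sub>\<tau> - L\<^sub>0\<bar> \<le> C (t\<^sup>\<alpha> + K exp (- t / \<tau>))\<close>, so \<open>L\<^sub>\<tau> \<rightarrow> L\<^sub>0\<close> uniformly as \<open>\<tau> \<rightarrow> 0\<close>.
  The same margin argument shows that \<open>L\<^sub>0\<close> is continuous: an \<open>L\<^sup>\<infinity>\<close>-perturbation of the logits
  of size \<open>t / 2\<close> can only change the winner where \<open>\<Delta> \<le> t\<close>, and \<open>L\<^sup>2\<close>-close experts are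
  \<open>L\<^sup>1\<close>-close. A uniform limit of functions with a continuous limit on a compact space is a
  \<open>\<Gamma>\<close>-limit, converges along convergent parameter families, and almost minimisers cluster
  only at minimisers.
\<close>

section \<open>Hard winner and top-two margin\<close>

lemma hard_winner_is_argmax:
  assumes "0 < K"
  shows "hard_winner K v < K \<and> (\<forall>j<K. v j \<le> v (hard_winner K v))"
proof -
  have "Max (v ` {..<K}) \<in> v ` {..<K}" using assms by (intro Max_in) auto
  then obtain k where "k < K" "v k = Max (v ` {..<K})" by auto
  then have "k < K \<and> (\<forall>j<K. v j \<le> v k)" by auto
  then show ?thesis unfolding hard_winner_def by (rule LeastI)
qed

text \<open>
  The margin is defined by sorting; rewriting it as winner minus runner-up makes both the gap
  estimate and measurability immediate.
\<close>

definition runner_up :: "nat \<Rightarrow> (nat \<Rightarrow> real) \<Rightarrow> real" where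
  "runner_up K v = Max (v ` ({..<K} - {hard_winner K v}))"

lemma hd_eq_Max_if_sorted_desc:
  fixes l :: "'a::linorder list"
  assumes "sorted_wrt (\<ge>) l" "l \<noteq> []"
  shows "hd l = Max (set l)"
  using assms by (cases l) (auto intro!: Max_eqI[symmetric])

lemma margin_eq_runner_up:
  assumes "2 \<le> K"
  shows "margin K v = v (hard_winner K v) - runner_up K v"
proof -
  define k where "k = hard_winner K v"
  define l where "l = rev (sort (map v [0..<K]))"
  have k: "k < K" "\<forall>j<K. v j \<le> v k" using hard_winner_is_argmax[of K v] assms by (auto simp: k_def)
  have desc: "sorted_wrt (\<ge>) l" by (simp add: l_def sorted_wrt_rev)
  have len: "length l = K" by (simp add: l_def)
  have mset_l: "mset l = add_mset (v k) (image_mset v (mset_set ({..<K} - {k})))"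
    using k(1) by (simp add: l_def atLeast0LessThan mset_set.remove[of "{..<K}" k])
  have "hd l = Max (set l)" using desc len assms by (intro hd_eq_Max_if_sorted_desc) auto
  also have "\<dots> = v k"
    using k by (intro Max_eqI) (auto simp: l_def)
  finally have hd: "hd l = v k" .
  have "mset (tl l) = image_mset v (mset_set ({..<K} - {k}))"
    using mset_l hd len assms by (cases l) auto
  then have "set (tl l) = v ` ({..<K} - {k})"
    by (metis finite_Diff finite_lessThan finite_set_mset_mset_set set_image_mset set_mset_mset)
  moreover have "hd (tl l) = Max (set (tl l))"
    using desc len assms by (cases l) (auto intro!: hd_eq_Max_if_sorted_desc)
  ultimately have "hd (tl l) = runner_up K v" by (simp add: runner_up_def k_def)
  moreover have "l ! 0 = hd l" "l ! 1 = hd (tl l)" using len assms by (cases l; cases "tl l"; auto)+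
  ultimately show ?thesis by (simp add: margin_def Let_def l_def [symmetric] hd k_def)
qed

lemma le_hard_winner_minus_margin:
  assumes "2 \<le> K" "j < K" "j \<noteq> hard_winner K v"
  shows "v j \<le> v (hard_winner K v) - margin K v"
  using assms by (simp add: margin_eq_runner_up runner_up_def)

lemma hard_winner_stable:
  assumes K: "2 \<le> K" and close: "\<forall>k<K. \<bar>w k - v k\<bar> \<le> e" and gap: "2 * e < margin K v"
  shows "hard_winner K w = hard_winner K v"
proof -
  let ?k = "hard_winner K v"
  have k: "?k < K" "\<forall>j<K. v j \<le> v ?k" using hard_winner_is_argmax[of K v] K by auto
  have less: "w j < w ?k" if "j < K" "j \<noteq> ?k" for j
  proof -
    have "v j \<le> v ?k - margin K v" using le_hard_winner_minus_margin[OF K that] .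
    moreover have "\<bar>w j - v j\<bar> \<le> e" "\<bar>w ?k - v ?k\<bar> \<le> e" using close that k(1) by auto
    ultimately show ?thesis using gap by (simp add: abs_le_iff)
  qed
  show ?thesis unfolding hard_winner_def[of K w]
  proof (rule Least_equality)
    show "?k < K \<and> (\<forall>j<K. w j \<le> w ?k)" using k less by (metis order.strict_implies_order order_refl)
    show "?k \<le> j" if "j < K \<and> (\<forall>i<K. w i \<le> w j)" for j
      using that less k(1) by (metis not_less order_refl)
  qed
qed

lemma abs_hard_select_diff_le:
  fixes G G' :: "nat \<Rightarrow> real"
  assumes K: "2 \<le> K" and close: "\<forall>k<K. \<bar>w k - v k\<bar> \<le> \<epsilon>"
    and B: "\<And>k. k < K \<Longrightarrow> \<bar>G k\<bar> \<le> B" and B': "\<And>k. k < K \<Longrightarrow> \<bar>G' k\<bar> \<le> B"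
  shows "\<bar>G' (hard_winner K w) - G (hard_winner K v)\<bar>
    \<le> 2 * B * indicator {u. margin K u \<le> 2 * \<epsilon>} v + (\<Sum>k<K. \<bar>G' k - G k\<bar>)"
proof (cases "margin K v \<le> 2 * \<epsilon>")
  case True
  have "\<bar>G' (hard_winner K w)\<bar> \<le> B" "\<bar>G (hard_winner K v)\<bar> \<le> B"
    using hard_winner_is_argmax[of K] K B B' by auto
  moreover have "0 \<le> (\<Sum>k<K. \<bar>G' k - G k\<bar>)" by (simp add: sum_nonneg)
  ultimately have "\<bar>G' (hard_winner K w) - G (hard_winner K v)\<bar> \<le> 2 * B + (\<Sum>k<K. \<bar>G' k - G k\<bar>)"
    using abs_triangle_ineq4[of "G' (hard_winner K w)" "G (hard_winner K v)"] by linarith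
  then show ?thesis using True by simp
next
  case False
  then have "hard_winner K w = hard_winner K v" using hard_winner_stable[OF K close] by simp
  moreover have "\<bar>G' k - G k\<bar> \<le> (\<Sum>k<K. \<bar>G' k - G k\<bar>)" if "k < K" for k
    using that by (intro member_le_sum) auto
  ultimately show ?thesis using False hard_winner_is_argmax[of K v] K by simp
qed

lemma measurable_hard_winner:
  assumes A: "\<And>k. k < K \<Longrightarrow> (\<lambda>\<omega>. A \<omega> k) \<in> borel_measurable M"
  shows "(\<lambda>\<omega>. hard_winner K (A \<omega>)) \<in> measurable M (count_space UNIV)"
  unfolding hard_winner_def
proof (rule measurable_Least)
  fix k
  show "(\<lambda>\<omega>. k < K \<and> (\<forall>j<K. A \<omega> j \<le> A \<omega> k)) \<in> measurable M (count_space UNIV)"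
  proof (cases "k < K")
    case True
    have "Measurable.pred M (\<lambda>\<omega>. \<forall>j\<in>{..<K}. A \<omega> j \<le> A \<omega> k)"
    proof (rule pred_intros_finite(3))
      show "Measurable.pred M (\<lambda>\<omega>. A \<omega> j \<le> A \<omega> k)" if "j \<in> {..<K}" for j
        unfolding pred_def using A True that by (intro borel_measurable_le) auto
    qed simp
    moreover have "(\<lambda>\<omega>. k < K \<and> (\<forall>j<K. A \<omega> j \<le> A \<omega> k)) = (\<lambda>\<omega>. \<forall>j\<in>{..<K}. A \<omega> j \<le> A \<omega> k)"
      using True by auto
    ultimately show ?thesis by simp
  qed simp
qed

lemma borel_measurable_hard_winner_select:
  fixes A :: "'a \<Rightarrow> nat \<Rightarrow> real" and G :: "nat \<Rightarrow> 'a \<Rightarrow> real"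
  assumes K: "0 < K"
    and A: "\<And>k. k < K \<Longrightarrow> (\<lambda>\<omega>. A \<omega> k) \<in> borel_measurable M"
    and G: "\<And>k. k < K \<Longrightarrow> G k \<in> borel_measurable M"
  shows "(\<lambda>\<omega>. G (hard_winner K (A \<omega>)) \<omega>) \<in> borel_measurable M"
proof -
  define G' where "G' k = (if k < K then G k else (\<lambda>_. 0))" for k
  have "(\<lambda>\<omega>. G' (hard_winner K (A \<omega>)) \<omega>) \<in> borel_measurable M"
    by (rule measurable_compose_countable[OF _ measurable_hard_winner[OF A]]) (auto simp: G'_def G)
  moreover have "G' (hard_winner K (A \<omega>)) \<omega> = G (hard_winner K (A \<omega>)) \<omega>" for \<omega>
    using hard_winner_is_argmax[OF K, of "A \<omega>"] by (simp add: G'_def)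
  ultimately show ?thesis by simp
qed

lemma borel_measurable_margin:
  fixes A :: "'a \<Rightarrow> nat \<Rightarrow> real"
  assumes K: "2 \<le> K" and A: "\<And>k. k < K \<Longrightarrow> (\<lambda>\<omega>. A \<omega> k) \<in> borel_measurable M"
  shows "(\<lambda>\<omega>. margin K (A \<omega>)) \<in> borel_measurable M"
proof -
  have K0: "0 < K" using K by simp
  have "(\<lambda>\<omega>. A \<omega> (hard_winner K (A \<omega>))) \<in> borel_measurable M"
    by (rule borel_measurable_hard_winner_select[OF K0 A A])
  moreover have "(\<lambda>\<omega>. Max (A \<omega> ` ({..<K} - {k}))) \<in> borel_measurable M" if "k < K" for k
    by (rule borel_measurable_Max) (simp_all add: A)
  then have "(\<lambda>\<omega>. runner_up K (A \<omega>)) \<in> borel_measurable M"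
    unfolding runner_up_def
    using borel_measurable_hard_winner_select[OF K0 A, where G="\<lambda>k \<omega>. Max (A \<omega> ` ({..<K} - {k}))"]
    by simp
  ultimately show ?thesis unfolding margin_eq_runner_up[OF K] by (rule borel_measurable_diff)
qed

section \<open>Softmax weights\<close>

lemma borel_measurable_softmax_mixture:
  fixes A :: "'a \<Rightarrow> nat \<Rightarrow> real" and G :: "nat \<Rightarrow> 'a \<Rightarrow> real"
  assumes A: "\<And>k. k < K \<Longrightarrow> (\<lambda>\<omega>. A \<omega> k) \<in> borel_measurable M"
    and G: "\<And>k. k < K \<Longrightarrow> G k \<in> borel_measurable M"
  shows "(\<lambda>\<omega>. \<Sum>k<K. softmax K (A \<omega>) \<tau> k * G k \<omega>) \<in> borel_measurable M"
proof -
  have exp_A: "(\<lambda>\<omega>. exp (A \<omega> k / \<tau>)) \<in> borel_measurable M" if "k < K" for k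
    using A[OF that] by measurable
  then have "(\<lambda>\<omega>. \<Sum>j<K. exp (A \<omega> j / \<tau>)) \<in> borel_measurable M"
    by (intro borel_measurable_sum) simp
  then show ?thesis
    unfolding softmax_def using exp_A G
    by (intro borel_measurable_sum borel_measurable_times borel_measurable_divide) simp_all
qed

lemma softmax_nonneg: "0 \<le> softmax K v \<tau> k"
  unfolding softmax_def by (intro divide_nonneg_nonneg sum_nonneg) auto

lemma sum_softmax:
  assumes "0 < K"
  shows "(\<Sum>k<K. softmax K v \<tau> k) = 1"
proof -
  have "0 < (\<Sum>j<K. exp (v j / \<tau>))" using assms by (intro sum_pos) auto
  then show ?thesis unfolding softmax_def by (simp add: sum_divide_distrib[symmetric])
qed

lemma softmax_le_exp_diff:
  assumes "k < K"
  shows "softmax K v \<tau> j \<le> exp ((v j - v k) / \<tau>)"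
proof -
  have "exp (v k / \<tau>) \<le> (\<Sum>i<K. exp (v i / \<tau>))"
    using assms by (intro member_le_sum) auto
  moreover have "0 < (\<Sum>i<K. exp (v i / \<tau>))" using assms by (intro sum_pos) auto
  ultimately have "softmax K v \<tau> j \<le> exp (v j / \<tau>) / exp (v k / \<tau>)"
    unfolding softmax_def by (intro divide_left_mono) auto
  also have "\<dots> = exp ((v j - v k) / \<tau>)" by (simp add: diff_divide_distrib exp_diff)
  finally show ?thesis .
qed

lemma abs_softmax_mixture_le:
  assumes "0 < K" and "\<And>k. k < K \<Longrightarrow> \<bar>F k\<bar> \<le> B"
  shows "\<bar>\<Sum>k<K. softmax K v \<tau> k * F k\<bar> \<le> B"
proof -
  have "\<bar>\<Sum>k<K. softmax K v \<tau> k * F k\<bar> \<le> (\<Sum>k<K. softmax K v \<tau> k * B)"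
    using assms(2) softmax_nonneg
    by (intro order_trans[OF sum_abs sum_mono]) (simp add: abs_mult mult_left_mono)
  also have "\<dots> = B" using sum_softmax[OF assms(1)] by (simp add: sum_distrib_right[symmetric])
  finally show ?thesis .
qed

lemma abs_hard_minus_soft_le:
  assumes K: "2 \<le> K" and "0 < \<tau>" and B: "\<And>k. k < K \<Longrightarrow> \<bar>F k\<bar> \<le> B"
  shows "\<bar>F (hard_winner K v) - (\<Sum>k<K. softmax K v \<tau> k * F k)\<bar>
    \<le> 2 * B * indicator {w. margin K w \<le> t} v + 2 * B * K * exp (- t / \<tau>)"
proof -
  let ?k = "hard_winner K v" and ?w = "softmax K v \<tau>"
  have K0: "0 < K" using K by simp
  have k: "?k < K" using hard_winner_is_argmax[OF K0] by blast
  have spread: "\<bar>F ?k - F j\<bar> \<le> 2 * B" if "j < K" for j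
    using B[OF k] B[OF that] by linarith
  have "\<bar>F ?k - (\<Sum>j<K. ?w j * F j)\<bar> = \<bar>\<Sum>j<K. ?w j * (F ?k - F j)\<bar>"
    using sum_softmax[OF K0, of v \<tau>]
    by (simp add: right_diff_distrib sum_subtractf sum_distrib_right[symmetric])
  also have "\<dots> \<le> (\<Sum>j<K. ?w j * \<bar>F ?k - F j\<bar>)"
    using softmax_nonneg by (intro order_trans[OF sum_abs]) (simp add: abs_mult)
  also have "\<dots> \<le> 2 * B * indicator {w. margin K w \<le> t} v + 2 * B * K * exp (- t / \<tau>)"
  proof (cases "margin K v \<le> t")
    case True
    have "(\<Sum>j<K. ?w j * \<bar>F ?k - F j\<bar>) \<le> (\<Sum>j<K. ?w j * (2 * B))"
      using spread softmax_nonneg by (intro sum_mono mult_left_mono) auto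
    also have "\<dots> = 2 * B" using sum_softmax[OF K0] by (simp add: sum_distrib_right[symmetric])
    moreover have "0 \<le> 2 * B * K * exp (- t / \<tau>)" using spread[OF k] by simp
    ultimately show ?thesis using True by simp
  next
    case False
    have "?w j * \<bar>F ?k - F j\<bar> \<le> exp (- t / \<tau>) * (2 * B)" if j: "j < K" for j
    proof (cases "j = ?k")
      case False
      have "v j - v ?k \<le> - t"
        using le_hard_winner_minus_margin[OF K j False] \<open>\<not> margin K v \<le> t\<close> by simp
      then have "(v j - v ?k) / \<tau> \<le> - t / \<tau>" using \<open>0 < \<tau>\<close> by (intro divide_right_mono) auto
      then have "?w j \<le> exp (- t / \<tau>)"
        using softmax_le_exp_diff[OF k, of v \<tau> j] by (meson exp_le_cancel_iff order_trans)
      then show ?thesis using spread[OF j] softmax_nonneg[of K v \<tau> j] by (intro mult_mono) auto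
    qed (use spread[OF k] in simp)
    then have "(\<Sum>j<K. ?w j * \<bar>F ?k - F j\<bar>) \<le> (\<Sum>j<K. exp (- t / \<tau>) * (2 * B))"
      by (intro sum_mono) simp
    then show ?thesis using False by (simp add: mult_ac)
  qed
  finally show ?thesis .
qed

section \<open>Square loss and \<open>L\<^sup>1\<close> estimates for predictors\<close>

lemma abs_square_loss_diff_le:
  fixes y u v :: real
  assumes "\<bar>y\<bar> \<le> B\<^sub>Y" "\<bar>u\<bar> \<le> B" "\<bar>v\<bar> \<le> B"
  shows "\<bar>(y - u)\<^sup>2 - (y - v)\<^sup>2\<bar> \<le> 2 * (B\<^sub>Y + B) * \<bar>u - v\<bar>"
proof -
  have "(y - u)\<^sup>2 - (y - v)\<^sup>2 = (v - u) * (2 * y - u - v)"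
    by (simp add: power2_eq_square algebra_simps)
  moreover have "\<bar>2 * y - u - v\<bar> \<le> 2 * (B\<^sub>Y + B)" using assms by (auto simp: abs_le_iff)
  ultimately show ?thesis
    by (simp add: abs_mult abs_minus_commute mult.commute mult_left_mono)
qed

context prob_space
begin

lemma integrable_bounded_real:
  fixes g :: "'a \<Rightarrow> real"
  assumes "g \<in> borel_measurable M" "\<And>\<omega>. \<omega> \<in> space M \<Longrightarrow> \<bar>g \<omega>\<bar> \<le> B"
  shows "integrable M g"
  using assms by (intro integrable_const_bound[where B=B] AE_I2) auto

lemma square_loss_diff_le:
  fixes u v Y :: "'a \<Rightarrow> real"
  assumes meas: "u \<in> borel_measurable M" "v \<in> borel_measurable M" "Y \<in> borel_measurable M"
    and Y: "AE \<omega> in M. \<bar>Y \<omega>\<bar> \<le> B\<^sub>Y"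
    and u: "\<And>\<omega>. \<omega> \<in> space M \<Longrightarrow> \<bar>u \<omega>\<bar> \<le> B" and v: "\<And>\<omega>. \<omega> \<in> space M \<Longrightarrow> \<bar>v \<omega>\<bar> \<le> B"
  shows "\<bar>(\<integral>\<omega>. (Y \<omega> - u \<omega>)\<^sup>2 \<partial>M) - (\<integral>\<omega>. (Y \<omega> - v \<omega>)\<^sup>2 \<partial>M)\<bar>
     \<le> 2 * (B\<^sub>Y + B) * (\<integral>\<omega>. \<bar>u \<omega> - v \<omega>\<bar> \<partial>M)"
proof -
  have sq_bound: "AE \<omega> in M. norm ((Y \<omega> - w \<omega>)\<^sup>2) \<le> (B\<^sub>Y + B)\<^sup>2"
    if w: "\<And>\<omega>. \<omega> \<in> space M \<Longrightarrow> \<bar>w \<omega>\<bar> \<le> B" for w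
    using Y
  proof (rule AE_mp, intro AE_I2 impI)
    fix \<omega> assume "\<omega> \<in> space M" "\<bar>Y \<omega>\<bar> \<le> B\<^sub>Y"
    then have "\<bar>Y \<omega> - w \<omega>\<bar> \<le> B\<^sub>Y + B"
      using w abs_triangle_ineq4[of "Y \<omega>" "w \<omega>"] by fastforce
    from power_mono[OF this abs_ge_zero, of 2]
    show "norm ((Y \<omega> - w \<omega>)\<^sup>2) \<le> (B\<^sub>Y + B)\<^sup>2" by simp
  qed
  have int_u: "integrable M (\<lambda>\<omega>. (Y \<omega> - u \<omega>)\<^sup>2)" and int_v: "integrable M (\<lambda>\<omega>. (Y \<omega> - v \<omega>)\<^sup>2)"
    using meas by (intro integrable_const_bound[OF sq_bound] borel_measurable_power borel_measurable_diff;
        simp add: u v)+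
  have "\<bar>u \<omega> - v \<omega>\<bar> \<le> 2 * B" if "\<omega> \<in> space M" for \<omega>
    using u[OF that] v[OF that] by linarith
  then have int_uv: "integrable M (\<lambda>\<omega>. \<bar>u \<omega> - v \<omega>\<bar>)"
    using meas by (intro integrable_bounded_real) auto
  have "\<bar>(\<integral>\<omega>. (Y \<omega> - u \<omega>)\<^sup>2 \<partial>M) - (\<integral>\<omega>. (Y \<omega> - v \<omega>)\<^sup>2 \<partial>M)\<bar>
      \<le> (\<integral>\<omega>. \<bar>(Y \<omega> - u \<omega>)\<^sup>2 - (Y \<omega> - v \<omega>)\<^sup>2\<bar> \<partial>M)"
    using int_u int_v by (simp flip: Bochner_Integration.integral_diff)
  also have "\<dots> \<le> (\<integral>\<omega>. 2 * (B\<^sub>Y + B) * \<bar>u \<omega> - v \<omega>\<bar> \<partial>M)"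
  proof (rule integral_mono_AE)
    show "AE \<omega> in M. \<bar>(Y \<omega> - u \<omega>)\<^sup>2 - (Y \<omega> - v \<omega>)\<^sup>2\<bar> \<le> 2 * (B\<^sub>Y + B) * \<bar>u \<omega> - v \<omega>\<bar>"
      using Y by (rule AE_mp) (intro AE_I2 impI abs_square_loss_diff_le u v)
  qed (use int_u int_v int_uv in simp_all)
  finally show ?thesis by simp
qed

lemma integral_abs_le_of_integral_square_le:
  fixes u :: "'a \<Rightarrow> real"
  assumes "u \<in> borel_measurable M" "integrable M (\<lambda>\<omega>. (u \<omega>)\<^sup>2)"
    and "(\<integral>\<omega>. (u \<omega>)\<^sup>2 \<partial>M) \<le> \<delta>\<^sup>2" "0 \<le> \<delta>"
  shows "(\<integral>\<omega>. \<bar>u \<omega>\<bar> \<partial>M) \<le> \<delta>"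
proof -
  have "integrable M (\<lambda>\<omega>. \<bar>u \<omega>\<bar>)"
    using square_integrable_imp_integrable[OF assms(1,2)] by (rule integrable_abs)
  moreover have "integrable M (\<lambda>\<omega>. \<bar>u \<omega>\<bar>\<^sup>2)" using assms(2) by simp
  ultimately have "variance (\<lambda>\<omega>. \<bar>u \<omega>\<bar>) = (\<integral>\<omega>. (u \<omega>)\<^sup>2 \<partial>M) - (\<integral>\<omega>. \<bar>u \<omega>\<bar> \<partial>M)\<^sup>2"
    by (subst variance_eq) simp_all
  with variance_positive[of "\<lambda>\<omega>. \<bar>u \<omega>\<bar>"]
  have "(\<integral>\<omega>. \<bar>u \<omega>\<bar> \<partial>M)\<^sup>2 \<le> \<delta>\<^sup>2" using assms(3) by linarith
  then show ?thesis using assms(4) by (rule power2_le_imp_le)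
qed

lemma hard_soft_L1_le:
  fixes A :: "'a \<Rightarrow> nat \<Rightarrow> real" and G :: "nat \<Rightarrow> 'a \<Rightarrow> real"
  assumes K: "2 \<le> K" and "0 < \<tau>"
    and A: "\<And>k. k < K \<Longrightarrow> (\<lambda>\<omega>. A \<omega> k) \<in> borel_measurable M"
    and G: "\<And>k. k < K \<Longrightarrow> G k \<in> borel_measurable M"
    and B: "\<And>k \<omega>. k < K \<Longrightarrow> \<omega> \<in> space M \<Longrightarrow> \<bar>G k \<omega>\<bar> \<le> B"
  shows "(\<integral>\<omega>. \<bar>G (hard_winner K (A \<omega>)) \<omega> - (\<Sum>k<K. softmax K (A \<omega>) \<tau> k * G k \<omega>)\<bar> \<partial>M)
    \<le> 2 * B * prob {\<omega> \<in> space M. margin K (A \<omega>) \<le> t} + 2 * B * K * exp (- t / \<tau>)"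
proof -
  have K0: "0 < K" using K by simp
  define S where "S = {\<omega> \<in> space M. margin K (A \<omega>) \<le> t}"
  have S: "S \<in> events"
    unfolding S_def by (intro borel_measurable_le borel_measurable_margin[OF K A] borel_measurable_const)
  let ?c = "2 * B * K * exp (- t / \<tau>)"
  have "(\<integral>\<omega>. \<bar>G (hard_winner K (A \<omega>)) \<omega> - (\<Sum>k<K. softmax K (A \<omega>) \<tau> k * G k \<omega>)\<bar> \<partial>M)
      \<le> (\<integral>\<omega>. 2 * B * indicator S \<omega> + ?c \<partial>M)"
  proof (rule integral_mono)
    have "\<bar>G (hard_winner K (A \<omega>)) \<omega> - (\<Sum>k<K. softmax K (A \<omega>) \<tau> k * G k \<omega>)\<bar> \<le> B + B"
      if "\<omega> \<in> space M" for \<omega>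
    proof -
      have "\<bar>G (hard_winner K (A \<omega>)) \<omega>\<bar> \<le> B"
        using B hard_winner_is_argmax[OF K0] that by blast
      moreover have "\<bar>\<Sum>k<K. softmax K (A \<omega>) \<tau> k * G k \<omega>\<bar> \<le> B"
        using B that by (intro abs_softmax_mixture_le[OF K0])
      ultimately show ?thesis by linarith
    qed
    then show "integrable M (\<lambda>\<omega>. \<bar>G (hard_winner K (A \<omega>)) \<omega> - (\<Sum>k<K. softmax K (A \<omega>) \<tau> k * G k \<omega>)\<bar>)"
      by (intro integrable_bounded_real borel_measurable_abs borel_measurable_diff
          borel_measurable_hard_winner_select[OF K0 A G] borel_measurable_softmax_mixture[OF A G]) auto
    show "integrable M (\<lambda>\<omega>. 2 * B * indicator S \<omega> + ?c)"
      using S by (intro Bochner_Integration.integrable_add integrable_mult_right integrable_real_indicator)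
        (auto simp: emeasure_eq_measure)
    show "\<bar>G (hard_winner K (A \<omega>)) \<omega> - (\<Sum>k<K. softmax K (A \<omega>) \<tau> k * G k \<omega>)\<bar>
        \<le> 2 * B * indicator S \<omega> + ?c" if "\<omega> \<in> space M" for \<omega>
    proof -
      have "\<bar>G (hard_winner K (A \<omega>)) \<omega> - (\<Sum>k<K. softmax K (A \<omega>) \<tau> k * G k \<omega>)\<bar>
          \<le> 2 * B * indicator {w. margin K w \<le> t} (A \<omega>) + ?c"
        using B that by (intro abs_hard_minus_soft_le[OF K \<open>0 < \<tau>\<close>, where F="\<lambda>k. G k \<omega>"])
      then show ?thesis using that by (simp add: S_def indicator_def)
    qed
  qed
  also have "\<dots> = 2 * B * prob S + ?c"
    using S by (simp add: prob_space emeasure_eq_measure)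
  finally show ?thesis unfolding S_def .
qed

lemma hard_L1_perturb_le:
  fixes A A' :: "'a \<Rightarrow> nat \<Rightarrow> real" and G G' :: "nat \<Rightarrow> 'a \<Rightarrow> real"
  assumes K: "2 \<le> K"
    and A: "\<And>k. k < K \<Longrightarrow> (\<lambda>\<omega>. A \<omega> k) \<in> borel_measurable M"
    and A': "\<And>k. k < K \<Longrightarrow> (\<lambda>\<omega>. A' \<omega> k) \<in> borel_measurable M"
    and G: "\<And>k. k < K \<Longrightarrow> G k \<in> borel_measurable M"
    and G': "\<And>k. k < K \<Longrightarrow> G' k \<in> borel_measurable M"
    and B: "\<And>k \<omega>. k < K \<Longrightarrow> \<omega> \<in> space M \<Longrightarrow> \<bar>G k \<omega>\<bar> \<le> B"
    and B': "\<And>k \<omega>. k < K \<Longrightarrow> \<omega> \<in> space M \<Longrightarrow> \<bar>G' k \<omega>\<bar> \<le> B"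
    and close: "AE \<omega> in M. \<forall>k<K. \<bar>A' \<omega> k - A \<omega> k\<bar> \<le> \<epsilon>"
  shows "(\<integral>\<omega>. \<bar>G' (hard_winner K (A' \<omega>)) \<omega> - G (hard_winner K (A \<omega>)) \<omega>\<bar> \<partial>M)
    \<le> 2 * B * prob {\<omega> \<in> space M. margin K (A \<omega>) \<le> 2 * \<epsilon>} + (\<Sum>k<K. \<integral>\<omega>. \<bar>G' k \<omega> - G k \<omega>\<bar> \<partial>M)"
proof -
  have K0: "0 < K" using K by simp
  have winner: "hard_winner K v < K" for v using hard_winner_is_argmax[OF K0] by blast
  define S where "S = {\<omega> \<in> space M. margin K (A \<omega>) \<le> 2 * \<epsilon>}"
  have S: "S \<in> events"
    unfolding S_def by (intro borel_measurable_le borel_measurable_margin[OF K A] borel_measurable_const)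
  have spread: "\<bar>G' i \<omega> - G j \<omega>\<bar> \<le> 2 * B" if "i < K" "j < K" "\<omega> \<in> space M" for i j \<omega>
    using B[OF that(2,3)] B'[OF that(1,3)] by linarith
  have int_diff: "integrable M (\<lambda>\<omega>. \<bar>G' k \<omega> - G k \<omega>\<bar>)" if "k < K" for k
    using spread[OF that that] G[OF that] G'[OF that] by (intro integrable_bounded_real) auto
  have int_S: "integrable M (\<lambda>\<omega>. 2 * B * indicator S \<omega> :: real)"
    using S by (intro integrable_mult_right integrable_real_indicator) (auto simp: emeasure_eq_measure)
  have "(\<integral>\<omega>. \<bar>G' (hard_winner K (A' \<omega>)) \<omega> - G (hard_winner K (A \<omega>)) \<omega>\<bar> \<partial>M)
      \<le> (\<integral>\<omega>. 2 * B * indicator S \<omega> + (\<Sum>k<K. \<bar>G' k \<omega> - G k \<omega>\<bar>) \<partial>M)"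
  proof (rule integral_mono_AE)
    show "integrable M (\<lambda>\<omega>. \<bar>G' (hard_winner K (A' \<omega>)) \<omega> - G (hard_winner K (A \<omega>)) \<omega>\<bar>)"
      using spread[OF winner winner]
      by (intro integrable_bounded_real borel_measurable_abs borel_measurable_diff
          borel_measurable_hard_winner_select[OF K0 A G] borel_measurable_hard_winner_select[OF K0 A' G']) auto
    show "integrable M (\<lambda>\<omega>. 2 * B * indicator S \<omega> + (\<Sum>k<K. \<bar>G' k \<omega> - G k \<omega>\<bar>))"
      using int_S int_diff by (intro Bochner_Integration.integrable_add Bochner_Integration.integrable_sum) auto
    show "AE \<omega> in M. \<bar>G' (hard_winner K (A' \<omega>)) \<omega> - G (hard_winner K (A \<omega>)) \<omega>\<bar>
        \<le> 2 * B * indicator S \<omega> + (\<Sum>k<K. \<bar>G' k \<omega> - G k \<omega>\<bar>)"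
      using close
    proof (rule AE_mp, intro AE_I2 impI)
      fix \<omega> assume "\<omega> \<in> space M" "\<forall>k<K. \<bar>A' \<omega> k - A \<omega> k\<bar> \<le> \<epsilon>"
      with abs_hard_select_diff_le[OF K, of "A' \<omega>" "A \<omega>" \<epsilon> "\<lambda>k. G k \<omega>" B "\<lambda>k. G' k \<omega>"] B B'
      show "\<bar>G' (hard_winner K (A' \<omega>)) \<omega> - G (hard_winner K (A \<omega>)) \<omega>\<bar>
          \<le> 2 * B * indicator S \<omega> + (\<Sum>k<K. \<bar>G' k \<omega> - G k \<omega>\<bar>)"
        by (simp add: S_def indicator_def)
    qed
  qed
  also have "\<dots> = (\<integral>\<omega>. 2 * B * indicator S \<omega> \<partial>M) + (\<integral>\<omega>. (\<Sum>k<K. \<bar>G' k \<omega> - G k \<omega>\<bar>) \<partial>M)"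
    using int_diff by (intro Bochner_Integration.integral_add[OF int_S] Bochner_Integration.integrable_sum) auto
  also have "\<dots> = 2 * B * prob S + (\<Sum>k<K. \<integral>\<omega>. \<bar>G' k \<omega> - G k \<omega>\<bar> \<partial>M)"
    using S int_diff by (simp add: Bochner_Integration.integral_sum)
  finally show ?thesis unfolding S_def .
qed

end

section \<open>Uniform convergence and \<open>\<Gamma>\<close>-convergence\<close>

lemma eventually_powr_small:
  fixes \<alpha> :: real
  assumes "0 < \<alpha>" "0 < e"
  shows "\<forall>\<^sub>F t in at_right 0. c * t powr \<alpha> < e"
proof -
  have "((\<lambda>t. c * t powr \<alpha>) \<longlongrightarrow> 0) (at_right 0)" using assms(1) by real_asymp
  then show ?thesis using assms(2) by (rule order_tendstoD)
qed

lemma eventually_exp_small: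
  fixes t :: real
  assumes "0 < t" "0 < e"
  shows "\<forall>\<^sub>F \<tau> in at_right 0. d * exp (- t / \<tau>) < e"
proof -
  have "((\<lambda>\<tau>. d * exp (- t / \<tau>)) \<longlongrightarrow> 0) (at_right 0)" using assms(1) by real_asymp
  then show ?thesis using assms(2) by (rule order_tendstoD)
qed

lemma obtain_pos_powr_small:
  fixes \<alpha> :: real
  assumes "0 < \<alpha>" "0 < e"
  obtains t where "0 < t" "c * t powr \<alpha> < e"
proof -
  have "\<forall>\<^sub>F t in at_right 0. 0 < t \<and> c * t powr \<alpha> < e"
    using eventually_at_right_less eventually_powr_small[OF assms] by (rule eventually_conj)
  then show ?thesis using that eventually_happens'[of "at_right (0::real)"] by auto
qed

lemma uniform_limit_at_right_0_of_bound:
  fixes F :: "real \<Rightarrow> 'a \<Rightarrow> real" and \<alpha> :: real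
  assumes "0 < \<alpha>"
    and bound: "\<And>\<tau> t q. 0 < \<tau> \<Longrightarrow> 0 < t \<Longrightarrow> q \<in> S \<Longrightarrow>
      \<bar>F \<tau> q - G q\<bar> \<le> c * t powr \<alpha> + d * exp (- t / \<tau>)"
  shows "uniform_limit S F G (at_right 0)"
proof (rule uniform_limitI)
  fix e :: real assume "0 < e"
  then obtain t where t: "0 < t" "c * t powr \<alpha> < e / 2"
    using obtain_pos_powr_small[OF \<open>0 < \<alpha>\<close>, of "e / 2"] by auto
  show "\<forall>\<^sub>F \<tau> in at_right 0. \<forall>q\<in>S. dist (F \<tau> q) (G q) < e"
    using eventually_at_right_less eventually_exp_small[OF t(1) half_gt_zero[OF \<open>0 < e\<close>], where d=d]
  proof eventually_elim
    case (elim \<tau>)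
    show ?case
    proof
      fix q assume "q \<in> S"
      from bound[OF elim(1) t(1) this] t(2) elim(2)
      show "dist (F \<tau> q) (G q) < e" by (simp add: dist_real_def)
    qed
  qed
qed

lemma continuous_map_euclideanreal_iff_eventually:
  "continuous_map T euclideanreal F \<longleftrightarrow>
    (\<forall>p\<in>topspace T. \<forall>e>0. \<forall>\<^sub>F q in nhdsin T p. \<bar>F q - F p\<bar> < e)"
  unfolding Met_TC.continuous_map_to_metric[of T F, simplified] eventually_nhdsin
  by (simp add: dist_real_def abs_minus_commute)

lemma tendsto_uniform_limit_compose:
  fixes F :: "'b \<Rightarrow> 'a \<Rightarrow> real"
  assumes unif: "uniform_limit (topspace T) F G net" and cont: "continuous_map T euclideanreal G"
    and lim: "limitin T g p net" and in_T: "\<forall>\<^sub>F x in net. g x \<in> topspace T"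
  shows "((\<lambda>x. F x (g x)) \<longlongrightarrow> G p) net"
proof -
  have "((\<lambda>x. G (g x)) \<longlongrightarrow> G p) net"
    using continuous_map_limit[OF cont lim] by (simp add: comp_def)
  moreover have "((\<lambda>x. F x (g x) - G (g x)) \<longlongrightarrow> 0) net"
  proof (rule tendstoI)
    fix e :: real assume "0 < e"
    show "\<forall>\<^sub>F x in net. dist (F x (g x) - G (g x)) 0 < e"
      using uniform_limitD[OF unif \<open>0 < e\<close>] in_T by eventually_elim (auto simp: dist_real_def)
  qed
  ultimately show ?thesis by (auto dest: tendsto_add)
qed

lemma Liminf_Limsup_uniform_limit_compose:
  fixes F :: "real \<Rightarrow> 'p \<Rightarrow> real"
  assumes unif: "uniform_limit (topspace T) F G (at_right 0)"
    and cont: "continuous_map T euclideanreal G"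
    and g: "\<forall>\<tau>>0. g \<tau> \<in> topspace T" and lim: "limitin T g p (at_right 0)"
  shows "Liminf (at_right 0) (\<lambda>\<tau>. ereal (F \<tau> (g \<tau>))) = ereal (G p)"
    and "Limsup (at_right 0) (\<lambda>\<tau>. ereal (F \<tau> (g \<tau>))) = ereal (G p)"
proof -
  have "\<forall>\<^sub>F \<tau> in at_right 0. g \<tau> \<in> topspace T"
    using eventually_at_right_less[of 0] by eventually_elim (use g in auto)
  then have lim_ereal: "((\<lambda>\<tau>. ereal (F \<tau> (g \<tau>))) \<longlongrightarrow> ereal (G p)) (at_right 0)"
    by (intro tendsto_ereal tendsto_uniform_limit_compose[OF unif cont lim])
  show "Liminf (at_right 0) (\<lambda>\<tau>. ereal (F \<tau> (g \<tau>))) = ereal (G p)"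
    by (rule lim_imp_Liminf[OF trivial_limit_at_right_real lim_ereal])
  show "Limsup (at_right 0) (\<lambda>\<tau>. ereal (F \<tau> (g \<tau>))) = ereal (G p)"
    by (rule lim_imp_Limsup[OF trivial_limit_at_right_real lim_ereal])
qed

lemma gamma_limsup_le:
  assumes "((\<lambda>\<tau>. F \<tau> p) \<longlongrightarrow> c) (at_right 0)"
  shows "gamma_limsup T F p \<le> ereal c"
  unfolding gamma_limsup_def
proof (rule SUP_least)
  fix U assume "U \<in> {U. openin T U \<and> p \<in> U}"
  then have "Limsup (at_right 0) (\<lambda>\<tau>. INF q\<in>U. ereal (F \<tau> q)) \<le> Limsup (at_right 0) (\<lambda>\<tau>. ereal (F \<tau> p))"
    by (intro Limsup_mono) (auto intro!: always_eventually INF_lower)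
  also have "\<dots> = ereal c"
    using assms by (intro lim_imp_Limsup tendsto_ereal) simp_all
  finally show "Limsup (at_right 0) (\<lambda>\<tau>. INF q\<in>U. ereal (F \<tau> q)) \<le> ereal c" .
qed

lemma gamma_liminf_ge:
  assumes unif: "uniform_limit (topspace T) F G (at_right 0)"
    and cont: "continuous_map T euclideanreal G" and p: "p \<in> topspace T"
  shows "ereal (G p) \<le> gamma_liminf T F p"
proof (rule ereal_le_epsilon2)
  fix e :: real assume "0 < e"
  then have "\<forall>\<^sub>F q in nhdsin T p. \<bar>G q - G p\<bar> < e / 2"
    using cont p half_gt_zero[OF \<open>0 < e\<close>] unfolding continuous_map_euclideanreal_iff_eventually by blast
  then obtain U where U: "openin T U" "p \<in> U" "\<forall>q\<in>U. \<bar>G q - G p\<bar> < e / 2"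
    using p by (auto simp: eventually_nhdsin)
  have "\<forall>\<^sub>F \<tau> in at_right 0. ereal (G p - e) \<le> (INF q\<in>U. ereal (F \<tau> q))"
    using uniform_limitD[OF unif half_gt_zero[OF \<open>0 < e\<close>]]
  proof eventually_elim
    case (elim \<tau>)
    have "G p - e \<le> F \<tau> q" if "q \<in> U" for q
    proof -
      have "\<bar>F \<tau> q - G q\<bar> < e / 2" using elim that openin_subset[OF U(1)] by (auto simp: dist_real_def)
      moreover have "\<bar>G q - G p\<bar> < e / 2" using U(3) that by blast
      ultimately show ?thesis by linarith
    qed
    then show ?case by (auto intro: INF_greatest)
  qed
  then have "ereal (G p - e) \<le> Liminf (at_right 0) (\<lambda>\<tau>. INF q\<in>U. ereal (F \<tau> q))"
    by (rule Liminf_bounded)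
  also have "\<dots> \<le> gamma_liminf T F p"
    unfolding gamma_liminf_def using U by (intro SUP_upper) auto
  finally show "ereal (G p) \<le> gamma_liminf T F p + ereal e"
    by (cases "gamma_liminf T F p") auto
qed

lemma gamma_liminf_le_gamma_limsup: "gamma_liminf T F p \<le> gamma_limsup T F p"
proof -
  have "Liminf (at_right (0::real)) h \<le> Limsup (at_right 0) h" for h :: "real \<Rightarrow> ereal"
    by (rule Liminf_le_Limsup) simp
  then show ?thesis unfolding gamma_liminf_def gamma_limsup_def by (intro SUP_mono) blast
qed

lemma gamma_converges_if_uniform_limit:
  assumes unif: "uniform_limit (topspace T) F G (at_right 0)"
    and cont: "continuous_map T euclideanreal G"
  shows "gamma_converges T F G"
  unfolding gamma_converges_def
proof (intro ballI conjI)
  fix p assume p: "p \<in> topspace T"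
  have "((\<lambda>\<tau>. F \<tau> p) \<longlongrightarrow> G p) (at_right 0)"
    using uniform_limit_on_subset[OF unif, of "{p}"] p by simp
  then have "gamma_limsup T F p \<le> ereal (G p)" by (rule gamma_limsup_le)
  moreover have "ereal (G p) \<le> gamma_liminf T F p" by (rule gamma_liminf_ge[OF unif cont p])
  ultimately show "gamma_liminf T F p = ereal (G p)" "gamma_limsup T F p = ereal (G p)"
    using gamma_liminf_le_gamma_limsup[of T F p] by auto
qed

lemma cluster_point_of_almost_minimizers_minimizes:
  fixes F :: "real \<Rightarrow> 'p \<Rightarrow> real"
  assumes unif: "uniform_limit (topspace T) F G (at_right 0)"
    and cont: "continuous_map T euclideanreal G"
    and bdd: "\<And>\<tau>. bdd_below (F \<tau> ` topspace T)"
    and g: "\<forall>\<tau>>0. g \<tau> \<in> topspace T"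
    and almost_min: "((\<lambda>\<tau>. F \<tau> (g \<tau>) - (INF q\<in>topspace T. F \<tau> q)) \<longlongrightarrow> 0) (at_right 0)"
    and p: "p \<in> topspace T"
    and cluster: "\<forall>U. openin T U \<and> p \<in> U \<longrightarrow> (\<exists>\<^sub>F \<tau> in at_right 0. g \<tau> \<in> U)"
    and q: "q \<in> topspace T"
  shows "G p \<le> G q"
proof (rule field_le_epsilon)
  fix e :: real assume "0 < e"
  then have e4: "0 < e / 4" by simp
  have "\<forall>\<^sub>F r in nhdsin T p. \<bar>G r - G p\<bar> < e / 4"
    using cont p e4 unfolding continuous_map_euclideanreal_iff_eventually by blast
  then obtain U where U: "openin T U" "p \<in> U" "\<forall>r\<in>U. \<bar>G r - G p\<bar> < e / 4"
    using p by (auto simp: eventually_nhdsin)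
  have "\<forall>\<^sub>F \<tau> in at_right 0. g \<tau> \<in> U \<longrightarrow> G p \<le> G q + e"
    using eventually_at_right_less uniform_limitD[OF unif e4] order_tendstoD(2)[OF almost_min e4]
  proof eventually_elim
    case (elim \<tau>)
    show ?case
    proof
      assume "g \<tau> \<in> U"
      then have "\<bar>G (g \<tau>) - G p\<bar> < e / 4" using U(3) by blast
      moreover have "\<bar>F \<tau> (g \<tau>) - G (g \<tau>)\<bar> < e / 4" "\<bar>F \<tau> q - G q\<bar> < e / 4"
        using elim g q by (auto simp: dist_real_def)
      moreover have "(INF r\<in>topspace T. F \<tau> r) \<le> F \<tau> q" by (rule cINF_lower[OF bdd q])
      ultimately show "G p \<le> G q + e" using elim(3) by linarith
    qed
  qed
  moreover have "\<exists>\<^sub>F \<tau> in at_right 0. g \<tau> \<in> U" using cluster U by blast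
  ultimately have "\<exists>\<^sub>F \<tau> in at_right (0::real). G p \<le> G q + e" by (rule frequently_mp)
  then show "G p \<le> G q + e" by (simp add: frequently_const_iff)
qed

section \<open>The mixture-of-experts model\<close>

lemma eventually_nhdsin_L2_close:
  "L2_continuous T P F \<Longrightarrow> p \<in> topspace T \<Longrightarrow> 0 < e \<Longrightarrow>
    \<forall>\<^sub>F q in nhdsin T p. (\<integral>x. (F q x - F p x)\<^sup>2 \<partial>P) < e"
  unfolding L2_continuous_def eventually_nhdsin by blast

lemma eventually_nhdsin_Linf_close:
  "Linf_continuous T P F \<Longrightarrow> p \<in> topspace T \<Longrightarrow> 0 < e \<Longrightarrow>
    \<forall>\<^sub>F q in nhdsin T p. AE x in P. \<bar>F q x - F p x\<bar> \<le> e"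
  unfolding Linf_continuous_def eventually_nhdsin by blast

locale moe_model = prob_space M
  for M :: "'w measure" +
  fixes X :: "'w \<Rightarrow> 'x::topological_space" and Y :: "'w \<Rightarrow> real" and K :: nat
    and f :: "nat \<Rightarrow> 't \<Rightarrow> 'x \<Rightarrow> real" and a :: "'f \<Rightarrow> 'x \<Rightarrow> nat \<Rightarrow> real"
    and Theta :: "nat \<Rightarrow> 't set" and Phi :: "'f set" and T :: "((nat \<Rightarrow> 't) \<times> 'f) topology"
    and Xset :: "'x set" and C_mt \<alpha> B_Y B_f :: real
  assumes two_le_K: "2 \<le> K"
    and X_measurable: "X \<in> M \<rightarrow>\<^sub>M borel"
    and X_in_Xset: "\<forall>\<omega>\<in>space M. X \<omega> \<in> Xset"
    and Y_measurable: "Y \<in> borel_measurable M"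
    and f_measurable: "\<forall>k<K. \<forall>t\<in>Theta k. f k t \<in> borel_measurable borel"
    and a_measurable: "\<forall>\<phi>\<in>Phi. \<forall>k<K. (\<lambda>x. a \<phi> x k) \<in> borel_measurable borel"
    and margin_tail: "0 < \<alpha>"
      "\<forall>\<phi>\<in>Phi. \<forall>t>0. prob {\<omega>\<in>space M. margin K (a \<phi> (X \<omega>)) \<le> t} \<le> C_mt * t powr \<alpha>"
    and bounded: "0 < B_Y" "0 < B_f" "AE \<omega> in M. \<bar>Y \<omega>\<bar> \<le> B_Y"
      "\<forall>k<K. \<forall>x\<in>Xset. \<forall>t\<in>Theta k. \<bar>f k t x\<bar> \<le> B_f"
    and topspace_T: "topspace T = PiE {..<K} Theta \<times> Phi"
    and f_L2_continuous: "\<forall>k<K. L2_continuous T (distr M borel X) (\<lambda>p. f k (fst p k))"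
    and a_Linf_continuous: "\<forall>k<K. Linf_continuous T (distr M borel X) (\<lambda>p x. a (snd p) x k)"
begin

lemma param_in_Theta: "p \<in> topspace T \<Longrightarrow> k < K \<Longrightarrow> fst p k \<in> Theta k"
  and param_in_Phi: "p \<in> topspace T \<Longrightarrow> snd p \<in> Phi"
  by (auto simp: topspace_T mem_Times_iff)

lemma expert_measurable:
  assumes "p \<in> topspace T" "k < K"
  shows "(\<lambda>\<omega>. f k (fst p k) (X \<omega>)) \<in> borel_measurable M"
  using f_measurable param_in_Theta[OF assms] assms(2) by (intro measurable_compose[OF X_measurable]) auto

lemma logit_measurable:
  assumes "p \<in> topspace T" "k < K"
  shows "(\<lambda>\<omega>. a (snd p) (X \<omega>) k) \<in> borel_measurable M"
  using a_measurable param_in_Phi[OF assms(1)] assms(2)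
  by (intro measurable_compose[OF X_measurable, where g="\<lambda>x. a (snd p) x k"]) auto

lemma expert_bounded:
  assumes "p \<in> topspace T" "k < K" "\<omega> \<in> space M"
  shows "\<bar>f k (fst p k) (X \<omega>)\<bar> \<le> B_f"
  using bounded(4) X_in_Xset param_in_Theta[OF assms(1,2)] assms(2,3) by blast

lemma hard_winner_less_K: "hard_winner K v < K"
  using hard_winner_is_argmax[of K v] two_le_K by simp

lemma hard_pred_bounded:
  assumes "p \<in> topspace T" "\<omega> \<in> space M"
  shows "\<bar>hard_pred K f a p (X \<omega>)\<bar> \<le> B_f"
  unfolding hard_pred_def Let_def by (rule expert_bounded[OF assms(1) hard_winner_less_K assms(2)])

lemma soft_pred_bounded:
  assumes "p \<in> topspace T" "\<omega> \<in> space M"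
  shows "\<bar>soft_pred K f a \<tau> p (X \<omega>)\<bar> \<le> B_f"
  unfolding soft_pred_def using two_le_K
  by (intro abs_softmax_mixture_le expert_bounded[OF assms(1) _ assms(2)]) simp_all

lemma hard_pred_measurable:
  assumes "p \<in> topspace T"
  shows "(\<lambda>\<omega>. hard_pred K f a p (X \<omega>)) \<in> borel_measurable M"
  unfolding hard_pred_def Let_def using two_le_K
  by (intro borel_measurable_hard_winner_select[where G="\<lambda>k \<omega>. f k (fst p k) (X \<omega>)"]
      logit_measurable[OF assms] expert_measurable[OF assms]) simp_all

lemma soft_pred_measurable:
  assumes "p \<in> topspace T"
  shows "(\<lambda>\<omega>. soft_pred K f a \<tau> p (X \<omega>)) \<in> borel_measurable M"
  unfolding soft_pred_def
  by (intro borel_measurable_softmax_mixture[where G="\<lambda>k \<omega>. f k (fst p k) (X \<omega>)"]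
      logit_measurable[OF assms] expert_measurable[OF assms])

lemma soft_hard_risk_diff_le:
  assumes p: "p \<in> topspace T" and "0 < \<tau>" "0 < t"
  shows "\<bar>soft_risk M X Y K f a \<tau> p - hard_risk M X Y K f a p\<bar>
    \<le> 4 * (B_Y + B_f) * B_f * C_mt * t powr \<alpha> + 4 * (B_Y + B_f) * B_f * K * exp (- t / \<tau>)"
proof -
  let ?A = "\<lambda>\<omega>. a (snd p) (X \<omega>)"
  have "\<bar>soft_risk M X Y K f a \<tau> p - hard_risk M X Y K f a p\<bar>
      \<le> 2 * (B_Y + B_f) * (\<integral>\<omega>. \<bar>hard_pred K f a p (X \<omega>) - soft_pred K f a \<tau> p (X \<omega>)\<bar> \<partial>M)"
    unfolding soft_risk_def hard_risk_def
    using square_loss_diff_le[OF soft_pred_measurable[OF p] hard_pred_measurable[OF p] Y_measurable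
        bounded(3) soft_pred_bounded[OF p] hard_pred_bounded[OF p]]
    by (simp add: abs_minus_commute)
  also have "\<dots> \<le> 2 * (B_Y + B_f) * (2 * B_f * prob {\<omega> \<in> space M. margin K (?A \<omega>) \<le> t}
      + 2 * B_f * K * exp (- t / \<tau>))"
    unfolding hard_pred_def soft_pred_def Let_def using bounded(1,2)
    by (intro mult_left_mono hard_soft_L1_le[OF two_le_K \<open>0 < \<tau>\<close>] logit_measurable[OF p]
        expert_measurable[OF p] expert_bounded[OF p]) simp_all
  also have "\<dots> \<le> 2 * (B_Y + B_f) * (2 * B_f * (C_mt * t powr \<alpha>) + 2 * B_f * K * exp (- t / \<tau>))"
    using margin_tail(2) param_in_Phi[OF p] \<open>0 < t\<close> bounded(1,2) by (intro mult_left_mono add_right_mono) auto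
  finally show ?thesis by (simp add: algebra_simps)
qed

lemma uniform_limit_soft_risk:
  "uniform_limit (topspace T) (\<lambda>\<tau>. soft_risk M X Y K f a \<tau>) (hard_risk M X Y K f a) (at_right 0)"
  by (rule uniform_limit_at_right_0_of_bound[OF margin_tail(1) soft_hard_risk_diff_le])

lemma expert_L1_dist_le:
  assumes p: "p \<in> topspace T" and q: "q \<in> topspace T" and k: "k < K"
    and L2: "(\<integral>x. (f k (fst q k) x - f k (fst p k) x)\<^sup>2 \<partial>distr M borel X) \<le> \<delta>\<^sup>2" and "0 \<le> \<delta>"
  shows "(\<integral>\<omega>. \<bar>f k (fst q k) (X \<omega>) - f k (fst p k) (X \<omega>)\<bar> \<partial>M) \<le> \<delta>"
proof (rule integral_abs_le_of_integral_square_le)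
  let ?d = "\<lambda>\<omega>. f k (fst q k) (X \<omega>) - f k (fst p k) (X \<omega>)"
  show d: "?d \<in> borel_measurable M"
    using expert_measurable[OF q k] expert_measurable[OF p k] by (rule borel_measurable_diff)
  have "\<bar>(?d \<omega>)\<^sup>2\<bar> \<le> (B_f + B_f)\<^sup>2" if "\<omega> \<in> space M" for \<omega>
  proof -
    have "\<bar>?d \<omega>\<bar> \<le> B_f + B_f"
      using expert_bounded[OF q k that] expert_bounded[OF p k that] by linarith
    from power_mono[OF this abs_ge_zero, of 2] show ?thesis by simp
  qed
  then show "integrable M (\<lambda>\<omega>. (?d \<omega>)\<^sup>2)"
    using d by (intro integrable_bounded_real borel_measurable_power) auto
  have "(\<lambda>x. (f k (fst q k) x - f k (fst p k) x)\<^sup>2) \<in> borel_measurable borel"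
    using f_measurable param_in_Theta[OF p k] param_in_Theta[OF q k] k
    by (intro borel_measurable_power borel_measurable_diff) auto
  then show "(\<integral>\<omega>. (?d \<omega>)\<^sup>2 \<partial>M) \<le> \<delta>\<^sup>2"
    using L2 by (simp add: integral_distr[OF X_measurable])
qed (fact \<open>0 \<le> \<delta>\<close>)

lemma hard_risk_diff_le:
  fixes \<epsilon> \<delta> :: real
  assumes p: "p \<in> topspace T" and q: "q \<in> topspace T" and "0 < \<epsilon>" "0 \<le> \<delta>"
    and close: "\<forall>k<K. AE x in distr M borel X. \<bar>a (snd q) x k - a (snd p) x k\<bar> \<le> \<epsilon>"
    and L2: "\<forall>k<K. (\<integral>x. (f k (fst q k) x - f k (fst p k) x)\<^sup>2 \<partial>distr M borel X) \<le> \<delta>\<^sup>2"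
  shows "\<bar>hard_risk M X Y K f a q - hard_risk M X Y K f a p\<bar>
    \<le> 2 * (B_Y + B_f) * (2 * B_f * C_mt * (2 * \<epsilon>) powr \<alpha> + K * \<delta>)"
proof -
  have "AE \<omega> in M. \<forall>k\<in>{..<K}. \<bar>a (snd q) (X \<omega>) k - a (snd p) (X \<omega>) k\<bar> \<le> \<epsilon>"
    using close by (intro AE_finite_allI AE_distrD[OF X_measurable]) auto
  then have close_M: "AE \<omega> in M. \<forall>k<K. \<bar>a (snd q) (X \<omega>) k - a (snd p) (X \<omega>) k\<bar> \<le> \<epsilon>"
    by eventually_elim auto
  have "\<bar>hard_risk M X Y K f a q - hard_risk M X Y K f a p\<bar>
      \<le> 2 * (B_Y + B_f) * (\<integral>\<omega>. \<bar>hard_pred K f a q (X \<omega>) - hard_pred K f a p (X \<omega>)\<bar> \<partial>M)"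
    unfolding hard_risk_def
    by (rule square_loss_diff_le[OF hard_pred_measurable[OF q] hard_pred_measurable[OF p] Y_measurable
        bounded(3) hard_pred_bounded[OF q] hard_pred_bounded[OF p]])
  also have "\<dots> \<le> 2 * (B_Y + B_f) * (2 * B_f * prob {\<omega> \<in> space M. margin K (a (snd p) (X \<omega>)) \<le> 2 * \<epsilon>}
      + (\<Sum>k<K. \<integral>\<omega>. \<bar>f k (fst q k) (X \<omega>) - f k (fst p k) (X \<omega>)\<bar> \<partial>M))"
    unfolding hard_pred_def Let_def using bounded(1,2)
    by (intro mult_left_mono hard_L1_perturb_le[OF two_le_K _ _ _ _ _ _ close_M] logit_measurable
        expert_measurable expert_bounded p q) simp_all
  also have "\<dots> \<le> 2 * (B_Y + B_f) * (2 * B_f * (C_mt * (2 * \<epsilon>) powr \<alpha>) + (\<Sum>k<K. \<delta>))"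
    using margin_tail(2) param_in_Phi[OF p] \<open>0 < \<epsilon>\<close> bounded(1,2) L2 \<open>0 \<le> \<delta>\<close>
    by (intro mult_left_mono add_mono sum_mono expert_L1_dist_le[OF p q]) auto
  finally show ?thesis by (simp add: algebra_simps)
qed

lemma continuous_map_hard_risk: "continuous_map T euclideanreal (hard_risk M X Y K f a)"
  unfolding continuous_map_euclideanreal_iff_eventually
proof (intro ballI allI impI)
  fix p and e :: real assume p: "p \<in> topspace T" and "0 < e"
  define c where "c = 2 * (B_Y + B_f)"
  have "0 < c" using bounded(1,2) by (simp add: c_def)
  obtain t where t: "0 < t" "c * (2 * B_f * C_mt) * t powr \<alpha> < e / 2"
    by (rule obtain_pos_powr_small[OF margin_tail(1) half_gt_zero[OF \<open>0 < e\<close>]])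
  define \<delta> where "\<delta> = e / (2 * c * K)"
  have "0 < \<delta>" using \<open>0 < e\<close> \<open>0 < c\<close> two_le_K by (simp add: \<delta>_def)
  have c_K_\<delta>: "c * (K * \<delta>) = e / 2" using \<open>0 < c\<close> two_le_K by (simp add: \<delta>_def field_simps)
  have "\<forall>\<^sub>F q in nhdsin T p. \<forall>k\<in>{..<K}. AE x in distr M borel X. \<bar>a (snd q) x k - a (snd p) x k\<bar> \<le> t / 2"
    using a_Linf_continuous p \<open>0 < t\<close> by (intro eventually_ball_finite ballI eventually_nhdsin_Linf_close) auto
  moreover have "\<forall>\<^sub>F q in nhdsin T p. \<forall>k\<in>{..<K}.
      (\<integral>x. (f k (fst q k) x - f k (fst p k) x)\<^sup>2 \<partial>distr M borel X) < \<delta>\<^sup>2"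
    using f_L2_continuous p \<open>0 < \<delta>\<close> by (intro eventually_ball_finite ballI eventually_nhdsin_L2_close) auto
  moreover have "\<forall>\<^sub>F q in nhdsin T p. q \<in> topspace T"
    using p by (auto simp: eventually_nhdsin)
  ultimately show "\<forall>\<^sub>F q in nhdsin T p. \<bar>hard_risk M X Y K f a q - hard_risk M X Y K f a p\<bar> < e"
  proof eventually_elim
    case (elim q)
    have "\<bar>hard_risk M X Y K f a q - hard_risk M X Y K f a p\<bar>
        \<le> c * (2 * B_f * C_mt * (2 * (t / 2)) powr \<alpha> + K * \<delta>)"
      unfolding c_def using elim \<open>0 < t\<close> \<open>0 < \<delta>\<close>
      by (intro hard_risk_diff_le[OF p]) (auto intro: less_imp_le)
    also have "\<dots> = c * (2 * B_f * C_mt) * t powr \<alpha> + c * (K * \<delta>)" by (simp add: algebra_simps)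
    finally show ?case using t(2) c_K_\<delta> by linarith
  qed
qed

end

theorem mainTheorem2:
  fixes M :: "'w measure"
    and X :: "'w \<Rightarrow> real ^ 'd"
    and Y :: "'w \<Rightarrow> real"
    and Xset :: "(real ^ 'd) set"
    and K :: nat
    and f :: "nat \<Rightarrow> 't \<Rightarrow> real ^ 'd \<Rightarrow> real"
    and a :: "'f \<Rightarrow> real ^ 'd \<Rightarrow> nat \<Rightarrow> real"
    and Theta :: "nat \<Rightarrow> 't set"
    and Phi :: "'f set"
    and T :: "((nat \<Rightarrow> 't) \<times> 'f) topology"
    and C_mt \<alpha> B_Y B_f :: real
  assumes M: "prob_space M"
    and K2: "K \<ge> 2"
    and Xset: "Xset \<in> sets borel"
    and Xmeas: "X \<in> M \<rightarrow>\<^sub>M borel"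
    and XinX: "\<forall>\<omega>\<in>space M. X \<omega> \<in> Xset"
    and Ymeas: "Y \<in> borel_measurable M"
    and f_L2: "\<forall>k<K. \<forall>t\<in>Theta k. in_L2 (distr M borel X) (f k t)"
    and a_L2: "\<forall>\<phi>\<in>Phi. \<forall>k<K. in_L2 (distr M borel X) (\<lambda>x. a \<phi> x k)"
    and a_Linf: "\<forall>\<phi>\<in>Phi. \<forall>k<K. in_Linf (distr M borel X) (\<lambda>x. a \<phi> x k)"
    and margin_cond: "C_mt > 0" "\<alpha> > 0"
      "\<forall>\<phi>\<in>Phi. \<forall>t>0. measure M {\<omega>\<in>space M. margin K (a \<phi> (X \<omega>)) \<le> t} \<le> C_mt * t powr \<alpha>"
    and bounds: "B_Y > 0" "B_f > 0"
      "AE \<omega> in M. \<bar>Y \<omega>\<bar> \<le> B_Y"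
      "\<forall>k<K. \<forall>x\<in>Xset. \<forall>t\<in>Theta k. \<bar>f k t x\<bar> \<le> B_f"
    and topspace_T: "topspace T = (PiE {..<K} Theta) \<times> Phi"
    and compact_T: "compact_space T"
    and f_cont: "\<forall>k<K. L2_continuous T (distr M borel X) (\<lambda>p. f k (fst p k))"
    and a_cont_L2: "\<forall>k<K. L2_continuous T (distr M borel X) (\<lambda>p x. a (snd p) x k)"
    and a_cont_Linf: "\<forall>k<K. Linf_continuous T (distr M borel X) (\<lambda>p x. a (snd p) x k)"
  shows "gamma_converges T (\<lambda>\<tau> p. soft_risk M X Y K f a \<tau> p) (hard_risk M X Y K f a)
    \<and> (\<forall>g p. (\<forall>\<tau>>0. g \<tau> \<in> topspace T) \<and> limitin T g p (at_right 0) \<longrightarrow>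
          ereal (hard_risk M X Y K f a p)
            \<le> Liminf (at_right 0) (\<lambda>\<tau>. ereal (soft_risk M X Y K f a \<tau> (g \<tau>))))
    \<and> (\<forall>p\<in>topspace T. \<exists>g. (\<forall>\<tau>>0. g \<tau> \<in> topspace T) \<and> limitin T g p (at_right 0) \<and>
          Limsup (at_right 0) (\<lambda>\<tau>. ereal (soft_risk M X Y K f a \<tau> (g \<tau>)))
            \<le> ereal (hard_risk M X Y K f a p))
    \<and> (\<forall>g. (\<forall>\<tau>>0. g \<tau> \<in> topspace T) \<and>
          ((\<lambda>\<tau>. soft_risk M X Y K f a \<tau> (g \<tau>)
                 - (INF q\<in>topspace T. soft_risk M X Y K f a \<tau> q)) \<longlongrightarrow> 0) (at_right 0)
        \<longrightarrow> compactin T (T closure_of (g ` {0<..}))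
          \<and> (\<forall>p\<in>topspace T. (\<forall>U. openin T U \<and> p \<in> U \<longrightarrow> (\<exists>\<^sub>F \<tau> in at_right 0. g \<tau> \<in> U))
                \<longrightarrow> (\<forall>q\<in>topspace T. hard_risk M X Y K f a p \<le> hard_risk M X Y K f a q)))"
proof -
  interpret moe_model M X Y K f a Theta Phi T Xset C_mt \<alpha> B_Y B_f
    by (intro moe_model.intro[OF M] moe_model_axioms.intro)
      (use K2 Xmeas XinX Ymeas f_L2 a_L2 margin_cond(2,3) bounds topspace_T f_cont a_cont_Linf
        in \<open>auto simp: in_L2_def\<close>)
  let ?soft = "soft_risk M X Y K f a" and ?hard = "hard_risk M X Y K f a"
  note unif = uniform_limit_soft_risk and cont = continuous_map_hard_risk
  have bdd: "bdd_below (?soft \<tau> ` topspace T)" for \<tau>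
    by (intro bdd_belowI[of _ 0]) (auto simp: soft_risk_def)
  show ?thesis
  proof (intro conjI allI impI ballI)
    show "gamma_converges T (\<lambda>\<tau> p. ?soft \<tau> p) ?hard"
      using gamma_converges_if_uniform_limit[OF unif cont] by simp
    show "ereal (?hard p) \<le> Liminf (at_right 0) (\<lambda>\<tau>. ereal (?soft \<tau> (g \<tau>)))"
      if "(\<forall>\<tau>>0. g \<tau> \<in> topspace T) \<and> limitin T g p (at_right 0)"
      for g :: "real \<Rightarrow> (nat \<Rightarrow> 't) \<times> 'f" and p
      using Liminf_Limsup_uniform_limit_compose(1)[OF unif cont conjunct1[OF that] conjunct2[OF that]]
      by simp
    show "\<exists>g. (\<forall>\<tau>>0. g \<tau> \<in> topspace T) \<and> limitin T g p (at_right 0) \<and>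
        Limsup (at_right 0) (\<lambda>\<tau>. ereal (?soft \<tau> (g \<tau>))) \<le> ereal (?hard p)"
      if "p \<in> topspace T" for p
      using Liminf_Limsup_uniform_limit_compose(2)[OF unif cont, of "\<lambda>_. p" p] that
      by (intro exI[of _ "\<lambda>_. p"]) simp
    show "compactin T (T closure_of (g ` {0<..}))" for g :: "real \<Rightarrow> (nat \<Rightarrow> 't) \<times> 'f"
      using compact_T unfolding compact_space_def
      by (rule closed_compactin) (simp_all add: closure_of_subset_topspace)
    show "?hard p \<le> ?hard q"
      if "(\<forall>\<tau>>0. g \<tau> \<in> topspace T) \<and>
          ((\<lambda>\<tau>. ?soft \<tau> (g \<tau>) - (INF q\<in>topspace T. ?soft \<tau> q)) \<longlongrightarrow> 0) (at_right 0)"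
        and "p \<in> topspace T" "\<forall>U. openin T U \<and> p \<in> U \<longrightarrow> (\<exists>\<^sub>F \<tau> in at_right 0. g \<tau> \<in> U)"
        and "q \<in> topspace T"
      for g :: "real \<Rightarrow> (nat \<Rightarrow> 't) \<times> 'f" and p q
      using that by (intro cluster_point_of_almost_minimizers_minimizes[OF unif cont bdd]) auto
  qed
qed

end
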